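(* Consider the following percolation on $[L]\times\{0,1,2,\dots\}$: the edges joining $(i,0)$ and $(i+1,0)$ are open for all $i$; if $(i,t)$ belongs to an open edge, then with probability at least $0.99$ the edges joining $(i,t)$ to $(i,t+1)$ and to $(i\pm1,t+1)$ are all open, these events occurring independently. Then with probability tending to $1$ as $L\to\infty$, the percolation reaches time $1.01^L$: there exists a path of open edges connecting some vertex $(i,0)$ and some vertex $(j,1.01^L)$ with $i,j\in[L]$. *)

theory Defs
  imports "HOL-Probability.Probability"
begin

text \<open>Vertices are pairs (i,t) with i in [L] = {1..L} (space) and t a natural number (time).
  Given the outcome of the coins X i t (X i t = True means: if (i,t) belongs to an open
  edge, then its three upward edges are opened), the open edges are the least family
  containing the time-0 horizontal edges and closed under the upward opening rule.\<close>

inductive open_edge :: "nat \<Rightarrow> (nat \<Rightarrow> nat \<Rightarrow> bool) \<Rightarrow> nat \<times> nat \<Rightarrow> nat \<times> nat \<Rightarrow> bool"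
  for L :: nat and X :: "nat \<Rightarrow> nat \<Rightarrow> bool" where
  base: "1 \<le> i \<Longrightarrow> i + 1 \<le> L \<Longrightarrow> open_edge L X (i, 0) (i + 1, 0)"
| up: "(\<exists>w. open_edge L X (i, t) w \<or> open_edge L X w (i, t)) \<Longrightarrow> X i t \<Longrightarrow>
       1 \<le> j \<Longrightarrow> j \<le> L \<Longrightarrow> i \<le> j + 1 \<Longrightarrow> j \<le> i + 1 \<Longrightarrow>
       open_edge L X (i, t) (j, t + 1)"

definition open_adj :: "nat \<Rightarrow> (nat \<Rightarrow> nat \<Rightarrow> bool) \<Rightarrow> nat \<times> nat \<Rightarrow> nat \<times> nat \<Rightarrow> bool" where
  "open_adj L X u v \<longleftrightarrow> open_edge L X u v \<or> open_edge L X v u"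

definition reaches :: "nat \<Rightarrow> (nat \<Rightarrow> nat \<Rightarrow> bool) \<Rightarrow> nat \<Rightarrow> bool" where
  "reaches L X T \<longleftrightarrow> (\<exists>i j. i \<in> {1..L} \<and> j \<in> {1..L} \<and> (open_adj L X)\<^sup>*\<^sup>* (i, 0) (j, T))"

end

theory Submission
  imports Defs
begin

text \<open>Call a site blocked if it is dead (carries no open edge) or closed (its coin fails).  A site
  is dead at time t + 1 exactly when all its neighbours at time t are blocked, so a maximal run of
  dead sites at time t + 1 lies above a blocked run at time t that is wider by one on each side
  away from the walls.  By induction on t, every maximal blocked run [x, y] carries a contour: a
  chain of distinct closed sites below it whose length is at least y + 1 - x plus the costs of its
  steps.  If the percolation dies out before
  time T, the whole row [1, L] is blocked and yields such a chain of length n \<ge> L + cost.  It is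
  all closed with probability at most 100^-n \<le> 10^-L 10^-(n + cost); since the weights 10^-cost
  of the possible successors of a site sum to at most 11/9, the sum over all chains starting
  below time T is at most T 10^-L, which is small for T = 1.01^L.\<close>

section \<open>Chains of sites and their weights\<close>

definition step_cost :: "nat \<times> nat \<Rightarrow> nat \<times> nat \<Rightarrow> nat" where
  "step_cost u v = (if v = (fst u + 1, snd u) then 0 else fst u + 1 - fst v)"

text \<open>From (a, s) a chain steps to (a + 1, s) at cost 0, or to (a + 1 - c, s - c) or
  (a + 1 - c, s + c) at cost c \<ge> 1.\<close>

definition chain_step :: "nat \<times> nat \<Rightarrow> nat \<times> nat \<Rightarrow> bool" where
  "chain_step u v \<longleftrightarrow> v = (fst u + 1, snd u) \<or>
     fst v \<le> fst u \<and> (snd v + (fst u + 1 - fst v) = snd u \<or> snd v = snd u + (fst u + 1 - fst v))"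

fun chain_cost :: "(nat \<times> nat) list \<Rightarrow> nat" where
  "chain_cost (u # v # r) = step_cost u v + chain_cost (v # r)"
| "chain_cost _ = 0"

lemma chain_cost_Cons: "g \<noteq> [] \<Longrightarrow> chain_cost (u # g) = step_cost u (hd g) + chain_cost g"
  by (cases g) auto

lemma chain_cost_append:
  "g1 \<noteq> [] \<Longrightarrow> g2 \<noteq> [] \<Longrightarrow>
   chain_cost (g1 @ g2) = chain_cost g1 + step_cost (last g1) (hd g2) + chain_cost g2"
  by (induction g1 rule: chain_cost.induct) (auto simp: chain_cost_Cons)

definition chains :: "(nat \<times> nat) set \<Rightarrow> nat \<times> nat \<Rightarrow> nat \<Rightarrow> (nat \<times> nat) list set" where
  "chains B u n = {g. length g = Suc n \<and> hd g = u \<and> set g \<subseteq> B \<and> successively chain_step g}"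

lemma finite_chains: "finite B \<Longrightarrow> finite (chains B u n)"
  by (rule finite_subset[OF _ finite_lists_length_eq[of B "Suc n"]]) (auto simp: chains_def)

lemma sum_UN_le:
  fixes f :: "'a \<Rightarrow> 'b::ordered_comm_monoid_add"
  assumes "finite I" "\<And>i. i \<in> I \<Longrightarrow> finite (A i)" "\<And>x. 0 \<le> f x"
  shows "sum f (\<Union>i\<in>I. A i) \<le> (\<Sum>i\<in>I. sum f (A i))"
proof -
  have "(\<Union>i\<in>I. A i) = snd ` Sigma I A" by force
  moreover have "sum f (snd ` Sigma I A) \<le> sum (f \<circ> snd) (Sigma I A)"
    by (rule sum_image_le) (use assms in auto)
  ultimately have "sum f (\<Union>i\<in>I. A i) \<le> sum (f \<circ> snd) (Sigma I A)"
    by simp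
  also have "\<dots> = (\<Sum>i\<in>I. sum f (A i))"
    using assms by (simp add: sum.Sigma split_beta)
  finally show ?thesis .
qed

lemma geometric_sum_le:
  fixes x :: real
  assumes "0 \<le> x" "x < 1"
  shows "(\<Sum>i<n. x ^ i) \<le> 1 / (1 - x)"
proof -
  have "(\<Sum>i<n. x ^ i) = (1 - x ^ n) / (1 - x)"
    using assms by (simp add: sum_gp_strict)
  also have "\<dots> \<le> 1 / (1 - x)"
    using assms by (intro divide_right_mono) auto
  finally show ?thesis .
qed

lemma step_weight_sum_le:
  assumes "finite S" and steps: "\<And>v. v \<in> S \<Longrightarrow> chain_step u v"
  shows "(\<Sum>v\<in>S. (1/10::real) ^ step_cost u v) \<le> 11/9"
proof -
  obtain a s where u: "u = (a, s)" by fastforce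
  define jumps where "jumps c = {(a - c, s - Suc c), (a - c, s + Suc c)}" for c
  let ?w = "\<lambda>v. (1/10::real) ^ step_cost u v"
  have "S \<subseteq> insert (a + 1, s) (\<Union>c\<le>a. jumps c)"
  proof
    fix v assume "v \<in> S"
    with steps[of v] show "v \<in> insert (a + 1, s) (\<Union>c\<le>a. jumps c)"
      unfolding u chain_step_def jumps_def
      by (cases v) (auto intro!: bexI[where x = "a - fst v"])
  qed
  then have "sum ?w S \<le> sum ?w (insert (a + 1, s) (\<Union>c\<le>a. jumps c))"
    by (intro sum_mono2) (auto simp: jumps_def)
  also have "\<dots> = 1 + sum ?w (\<Union>c\<le>a. jumps c)"
    by (subst sum.insert) (auto simp: jumps_def u step_cost_def)
  also have "sum ?w (\<Union>c\<le>a. jumps c) \<le> (\<Sum>c\<le>a. sum ?w (jumps c))"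
    by (rule sum_UN_le) (auto simp: jumps_def)
  also have "\<dots> \<le> (\<Sum>c\<le>a. 2 * (1/10) ^ Suc c)"
  proof (rule sum_mono)
    fix c assume "c \<in> {..a}"
    then have "?w (a - c, s - Suc c) = (1/10) ^ Suc c" "?w (a - c, s + Suc c) = (1/10) ^ Suc c"
      by (auto simp: u step_cost_def)
    moreover have "sum ?w (jumps c) \<le> ?w (a - c, s - Suc c) + ?w (a - c, s + Suc c)"
      by (simp add: jumps_def sum.insert_if)
    ultimately show "sum ?w (jumps c) \<le> 2 * (1/10) ^ Suc c"
      by simp
  qed
  also have "\<dots> = 1/5 * (\<Sum>c<Suc a. (1/10) ^ c)"
    by (simp add: sum_distrib_left lessThan_Suc_atMost)
  also have "\<dots> \<le> 1/5 * (10/9)"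
    using geometric_sum_le[of "1/10" "Suc a"] by simp
  finally show ?thesis by simp
qed

lemma chain_weight_sum_le:
  assumes "finite B"
  shows "(\<Sum>g\<in>chains B u n. (1/10::real) ^ chain_cost g) \<le> (11/9) ^ n"
proof (induction n arbitrary: u)
  case 0
  have "chains B u 0 \<subseteq> {[u]}" by (auto simp: chains_def length_Suc_conv)
  then have "(\<Sum>g\<in>chains B u 0. (1/10::real) ^ chain_cost g) \<le> (\<Sum>g\<in>{[u]}. (1/10) ^ chain_cost g)"
    by (intro sum_mono2) auto
  then show ?case by simp
next
  case (Suc n)
  let ?w = "\<lambda>g. (1/10::real) ^ chain_cost g"
  define S where "S = {v \<in> B. chain_step u v}"
  have finite_S: "finite S" using assms by (simp add: S_def)
  have "chains B u (Suc n) \<subseteq> (\<Union>v\<in>S. Cons u ` chains B v n)"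
  proof
    fix g assume "g \<in> chains B u (Suc n)"
    then obtain v r where "g = u # v # r" "v \<in> S" "v # r \<in> chains B v n"
      by (auto simp: chains_def S_def length_Suc_conv)
    then show "g \<in> (\<Union>v\<in>S. Cons u ` chains B v n)" by blast
  qed
  then have "sum ?w (chains B u (Suc n)) \<le> sum ?w (\<Union>v\<in>S. Cons u ` chains B v n)"
    by (intro sum_mono2) (auto simp: finite_S finite_chains assms)
  also have "\<dots> \<le> (\<Sum>v\<in>S. sum ?w (Cons u ` chains B v n))"
    by (rule sum_UN_le) (auto simp: finite_S finite_chains assms)
  also have "\<dots> = (\<Sum>v\<in>S. (1/10) ^ step_cost u v * sum ?w (chains B v n))"
  proof (rule sum.cong[OF refl])
    fix v
    have "?w (u # g) = (1/10) ^ step_cost u v * ?w g" if "g \<in> chains B v n" for g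
      using that by (cases g) (auto simp: chains_def power_add)
    then show "sum ?w (Cons u ` chains B v n) = (1/10) ^ step_cost u v * sum ?w (chains B v n)"
      by (simp add: sum.reindex sum_distrib_left)
  qed
  also have "\<dots> \<le> (\<Sum>v\<in>S. (1/10) ^ step_cost u v) * (11/9) ^ n"
    unfolding sum_distrib_right by (intro sum_mono mult_left_mono Suc.IH) auto
  also have "\<dots> \<le> 11/9 * (11/9) ^ n"
    by (intro mult_right_mono step_weight_sum_le finite_S) (auto simp: S_def)
  finally show ?case by simp
qed

lemma chains_weight_sum_le_one:
  assumes "finite B"
  shows "(\<Sum>n<N. \<Sum>g\<in>chains B u n. (1/10::real) ^ (length g + chain_cost g)) \<le> 1"
proof -
  have "(\<Sum>g\<in>chains B u n. (1/10::real) ^ (length g + chain_cost g)) \<le> 1/10 * (11/90) ^ n" for n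
  proof -
    have "(\<Sum>g\<in>chains B u n. (1/10::real) ^ (length g + chain_cost g))
        = (1/10) ^ Suc n * (\<Sum>g\<in>chains B u n. (1/10) ^ chain_cost g)"
      by (simp add: chains_def power_add sum_distrib_left)
    also have "\<dots> \<le> (1/10) ^ Suc n * (11/9) ^ n"
      by (intro mult_left_mono chain_weight_sum_le assms) simp
    also have "\<dots> = 1/10 * (11/90) ^ n"
      by (simp add: power_mult_distrib[symmetric])
    finally show ?thesis .
  qed
  then have "(\<Sum>n<N. \<Sum>g\<in>chains B u n. (1/10::real) ^ (length g + chain_cost g))
      \<le> 1/10 * (\<Sum>n<N. (11/90) ^ n)"
    unfolding sum_distrib_left by (rule sum_mono)
  also have "\<dots> \<le> 1/10 * (90/79)"
    using geometric_sum_le[of "11/90" N] by simp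
  finally show ?thesis by simp
qed

definition crossing_chains :: "nat \<Rightarrow> nat \<Rightarrow> (nat \<times> nat) list set" where
  "crossing_chains L T = {g. g \<noteq> [] \<and> distinct g \<and> set g \<subseteq> {1..L} \<times> {..<T} \<and>
     successively chain_step g \<and> fst (hd g) = 1 \<and> L + chain_cost g \<le> length g}"

lemma crossing_chains_subset:
  "crossing_chains L T \<subseteq> (\<Union>s<T. \<Union>n<L * T. chains ({1..L} \<times> {..<T}) (1, s) n)"
proof
  fix g assume g: "g \<in> crossing_chains L T"
  then have "length g = card (set g)"
    by (simp add: crossing_chains_def distinct_card)
  also have "\<dots> \<le> card ({1..L} \<times> {..<T})"
    using g by (intro card_mono) (auto simp: crossing_chains_def)
  finally have "length g - 1 < L * T"
    using g by (cases g) (auto simp: crossing_chains_def)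
  moreover have "hd g \<in> {1..L} \<times> {..<T}"
    using g hd_in_set[of g] by (auto simp: crossing_chains_def)
  moreover have "g \<in> chains ({1..L} \<times> {..<T}) (1, snd (hd g)) (length g - 1)"
    using g by (auto simp: crossing_chains_def chains_def prod_eq_iff)
  ultimately show "g \<in> (\<Union>s<T. \<Union>n<L * T. chains ({1..L} \<times> {..<T}) (1, s) n)"
    by (auto simp: mem_Times_iff)
qed

lemma finite_crossing_chains: "finite (crossing_chains L T)"
  by (rule finite_subset[OF crossing_chains_subset]) (simp add: finite_chains)

text \<open>Since L + chain_cost g \<le> length g, the weight 100^-length g of a crossing chain is at most
  10^-L times the weight 10^-(length g + chain_cost g), whose total over all chains from a
  fixed site is at most 1.\<close>

lemma crossing_chains_weight_le:
  "(\<Sum>g\<in>crossing_chains L T. (1/100::real) ^ length g) \<le> T * (1/10) ^ L"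
proof -
  define B where "B = {1..L} \<times> {..<T}"
  let ?w = "\<lambda>g. (1/10::real) ^ L * (1/10) ^ (length g + chain_cost g)"
  have "(1/100::real) ^ length g \<le> ?w g" if "g \<in> crossing_chains L T" for g
  proof -
    have "(1/100::real) ^ length g = (1/10) ^ (length g + length g)"
      by (simp add: power_add power_mult_distrib[symmetric])
    also have "\<dots> \<le> (1/10) ^ (L + (length g + chain_cost g))"
      using that by (intro power_decreasing) (auto simp: crossing_chains_def)
    finally show ?thesis by (simp add: power_add)
  qed
  then have "(\<Sum>g\<in>crossing_chains L T. (1/100::real) ^ length g) \<le> sum ?w (crossing_chains L T)"
    by (rule sum_mono)
  also have "\<dots> \<le> sum ?w (\<Union>s<T. \<Union>n<L * T. chains B (1, s) n)"
    using crossing_chains_subset unfolding B_def by (intro sum_mono2) (auto simp: finite_chains)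
  also have "\<dots> \<le> (\<Sum>s<T. \<Sum>n<L * T. sum ?w (chains B (1, s) n))"
    by (intro order_trans[OF sum_UN_le] sum_mono sum_UN_le) (auto simp: B_def finite_chains)
  also have "\<dots> = (1/10) ^ L * (\<Sum>s<T. \<Sum>n<L * T. \<Sum>g\<in>chains B (1, s) n. (1/10) ^ (length g + chain_cost g))"
    by (simp add: sum_distrib_left)
  also have "\<dots> \<le> (1/10) ^ L * (\<Sum>s<T. 1)"
    by (intro mult_left_mono sum_mono chains_weight_sum_le_one) (auto simp: B_def)
  finally show ?thesis by (simp add: mult.commute)
qed

section \<open>Dead sites and contours\<close>

lemma run_left_end:
  fixes A :: "nat set"
  assumes "m \<in> A" "x \<le> m"
  shows "\<exists>p. x \<le> p \<and> p \<le> m \<and> {p..m} \<subseteq> A \<and> (p = x \<or> p - 1 \<notin> A)"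
  using assms
proof (induction m)
  case 0
  then show ?case by auto
next
  case (Suc m)
  show ?case
  proof (cases "x = Suc m \<or> m \<notin> A")
    case True
    then show ?thesis using Suc.prems by (intro exI[of _ "Suc m"]) auto
  next
    case False
    then obtain p where "x \<le> p" "p \<le> m" "{p..m} \<subseteq> A" "p = x \<or> p - 1 \<notin> A"
      using Suc by auto
    then show ?thesis using Suc.prems by (intro exI[of _ p]) (auto simp: le_Suc_eq)
  qed
qed

definition span :: "nat \<Rightarrow> nat \<Rightarrow> nat set" where
  "span a b = {min a b..max a b}"

locale percolation =
  fixes L :: nat and X :: "nat \<Rightarrow> nat \<Rightarrow> bool"
begin

primrec active :: "nat \<Rightarrow> nat set" where
  "active 0 = {1..L}"
| "active (Suc t) = {j \<in> {1..L}. \<exists>i \<in> active t. X i t \<and> i \<le> j + 1 \<and> j \<le> i + 1}"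

definition dead :: "nat \<Rightarrow> nat set" where
  "dead t = {1..L} - active t"

definition closed_sites :: "nat \<Rightarrow> nat set" where
  "closed_sites t = {i \<in> {1..L}. \<not> X i t}"

definition blocked :: "nat \<Rightarrow> nat set" where
  "blocked t = dead t \<union> closed_sites t"

lemma active_subset: "active t \<subseteq> {1..L}"
  by (cases t) auto

lemma dead_subset: "dead t \<subseteq> {1..L}"
  by (auto simp: dead_def)

lemma dead_subset_blocked: "dead t \<subseteq> blocked t"
  by (auto simp: blocked_def)

lemma dead_0 [simp]: "dead 0 = {}"
  by (auto simp: dead_def)

lemma dead_Suc_iff:
  "j \<in> dead (Suc t) \<longleftrightarrow> j \<in> {1..L} \<and> (\<forall>i\<in>{1..L}. i \<le> j + 1 \<and> j \<le> i + 1 \<longrightarrow> i \<in> blocked t)"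
  using active_subset[of t] by (auto simp: dead_def blocked_def closed_sites_def)

lemma blocked_if_near_dead:
  "j \<in> dead (Suc t) \<Longrightarrow> i \<in> {1..L} \<Longrightarrow> i \<le> j + 1 \<Longrightarrow> j \<le> i + 1 \<Longrightarrow> i \<in> blocked t"
  unfolding dead_Suc_iff by blast

lemma dead_SucI:
  "j \<in> {1..L} \<Longrightarrow> (\<And>i. i \<in> {1..L} \<Longrightarrow> i \<le> j + 1 \<Longrightarrow> j \<le> i + 1 \<Longrightarrow> i \<in> blocked t) \<Longrightarrow>
   j \<in> dead (Suc t)"
  unfolding dead_Suc_iff by blast

lemma two_dead_imp_one_dead: "2 \<in> dead (Suc t) \<Longrightarrow> 1 \<in> dead (Suc t)"
  by (rule dead_SucI) (auto intro: blocked_if_near_dead dest: subsetD[OF dead_subset])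

lemma pred_L_dead_imp_L_dead:
  assumes "m + 1 = L" "m \<in> dead (Suc t)"
  shows "L \<in> dead (Suc t)"
proof (rule dead_SucI)
  show "L \<in> {1..L}" using assms by auto
  fix i assume "i \<in> {1..L}" "L \<le> i + 1"
  then show "i \<in> blocked t" using assms by (intro blocked_if_near_dead[OF assms(2)]) auto
qed

primrec dead_trail :: "nat \<Rightarrow> nat \<Rightarrow> nat \<Rightarrow> nat \<Rightarrow> bool" where
  "dead_trail 0 i s j \<longleftrightarrow> i = j"
| "dead_trail (Suc n) i s j \<longleftrightarrow>
     (\<exists>i'. i' \<in> dead (Suc s) \<and> span i i' \<subseteq> blocked s \<and> dead_trail n i' (Suc s) j)"

text \<open>Contours are kept inside the shadows of the runs they belong to; since shadows of pieces
  separated by a non-dead column are disjoint (shadow_disjoint), concatenated contours stay distinct.\<close>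

definition shadow :: "nat \<Rightarrow> nat \<Rightarrow> nat \<Rightarrow> (nat \<times> nat) set" where
  "shadow t x m = {(i, s). s \<le> t \<and> (\<exists>j\<in>{x..m}. dead_trail (t - s) i s j)}"

lemma span_dead_Suc:
  assumes "span i1 i2 \<subseteq> blocked s" "j1 \<in> dead (Suc s)" "j2 \<in> dead (Suc s)"
    "span i1 j1 \<subseteq> blocked s" "span i2 j2 \<subseteq> blocked s"
  shows "span j1 j2 \<subseteq> dead (Suc s)"
proof
  fix z assume z: "z \<in> span j1 j2"
  show "z \<in> dead (Suc s)"
  proof (cases "z = j1 \<or> z = j2")
    case True
    then show ?thesis using assms by auto
  next
    case False
    have "span j1 j2 \<subseteq> span i1 j1 \<union> span i1 i2 \<union> span i2 j2"
      by (auto simp: span_def)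
    then have blocked: "{min j1 j2..max j1 j2} \<subseteq> blocked s"
      using assms unfolding span_def by blast
    have "j1 \<in> {1..L}" "j2 \<in> {1..L}"
      using assms(2,3) dead_subset by blast+
    then have "z \<in> {1..L}" using z by (auto simp: span_def)
    then show ?thesis
    proof (rule dead_SucI)
      fix i assume "i \<le> z + 1" "z \<le> i + 1"
      then have "i \<in> {min j1 j2..max j1 j2}" using False z by (auto simp: span_def)
      then show "i \<in> blocked s" using blocked by blast
    qed
  qed
qed

lemma dead_trail_span_dead:
  "span i1 i2 \<subseteq> blocked s \<Longrightarrow> dead_trail (Suc n) i1 s j1 \<Longrightarrow> dead_trail (Suc n) i2 s j2 \<Longrightarrow>
   span j1 j2 \<subseteq> dead (s + Suc n)"
proof (induction n arbitrary: s i1 i2)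
  case 0
  then show ?case using span_dead_Suc by auto
next
  case (Suc n)
  from Suc.prems(2) obtain a
    where a: "a \<in> dead (Suc s)" "span i1 a \<subseteq> blocked s" "dead_trail (Suc n) a (Suc s) j1"
    by auto
  from Suc.prems(3) obtain b
    where b: "b \<in> dead (Suc s)" "span i2 b \<subseteq> blocked s" "dead_trail (Suc n) b (Suc s) j2"
    by auto
  have "span a b \<subseteq> blocked (Suc s)"
    using span_dead_Suc[OF Suc.prems(1) a(1) b(1) a(2) b(2)] dead_subset_blocked by blast
  from Suc.IH[OF this a(3) b(3)] show ?case by simp
qed

lemma dead_trail_snoc:
  "dead_trail n i s j' \<Longrightarrow> j \<in> dead (Suc (s + n)) \<Longrightarrow> span j' j \<subseteq> blocked (s + n) \<Longrightarrow>
   dead_trail (Suc n) i s j"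
proof (induction n arbitrary: i s)
  case 0
  then show ?case by auto
next
  case (Suc n)
  then obtain a where "a \<in> dead (Suc s)" "span i a \<subseteq> blocked s" "dead_trail n a (Suc s) j'"
    by auto
  with Suc.IH[of a "Suc s"] Suc.prems show ?case by auto
qed

lemma blocked_if_dead_trail: "dead_trail (Suc n) i s j \<Longrightarrow> i \<in> blocked s"
  by (auto simp: span_def)

lemma shadow_disjoint:
  assumes "\<not> (m \<in> dead t \<and> m + 1 \<in> dead t)"
  shows "shadow t x m \<inter> shadow t (m + 1) y = {}"
proof (rule ccontr)
  assume "shadow t x m \<inter> shadow t (m + 1) y \<noteq> {}"
  then obtain i s j j' where s: "s \<le> t"
    and j: "j \<le> m" "dead_trail (t - s) i s j" and j': "m + 1 \<le> j'" "dead_trail (t - s) i s j'"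
    unfolding shadow_def by auto
  show False
  proof (cases "s = t")
    case True
    then show False using j j' by simp
  next
    case False
    then obtain n where n: "t - s = Suc n" using s by (cases "t - s") auto
    with j(2) j'(2) have trails: "dead_trail (Suc n) i s j" "dead_trail (Suc n) i s j'"
      by simp_all
    then have "span i i \<subseteq> blocked s"
      using blocked_if_dead_trail by (simp add: span_def)
    moreover have "s + Suc n = t" using n s by simp
    ultimately have "span j j' \<subseteq> dead t"
      using dead_trail_span_dead[OF _ trails] by metis
    moreover have "m \<in> span j j'" "m + 1 \<in> span j j'"
      using j(1) j'(1) by (auto simp: span_def)
    ultimately show False using assms by blast
  qed
qed

text \<open>A contour of the columns [x, m] at time t starts at the left wall (x = 1) or on the diagonal
  descending to the left from (x, t); the time it descends is its left offset, and symmetrically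
  on the right.  The offsets pay for the cost of the step joining two adjacent contours.\<close>

definition starts_left :: "nat \<Rightarrow> nat \<Rightarrow> (nat \<times> nat) list \<Rightarrow> bool" where
  "starts_left t x g \<longleftrightarrow>
     (if x = 1 then fst (hd g) = 1 else fst (hd g) + (t - snd (hd g)) = x \<and> snd (hd g) \<le> t)"

definition left_offset :: "nat \<Rightarrow> nat \<Rightarrow> (nat \<times> nat) list \<Rightarrow> nat" where
  "left_offset t x g = (if x = 1 then 0 else t - snd (hd g))"

definition ends_right :: "nat \<Rightarrow> nat \<Rightarrow> (nat \<times> nat) list \<Rightarrow> bool" where
  "ends_right t m g \<longleftrightarrow>
     (if m = L then fst (last g) = L else fst (last g) = m + (t - snd (last g)) \<and> snd (last g) \<le> t)"

definition right_offset :: "nat \<Rightarrow> nat \<Rightarrow> (nat \<times> nat) list \<Rightarrow> nat" where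
  "right_offset t m g = (if m = L then 0 else t - snd (last g))"

definition contour :: "nat \<Rightarrow> nat \<Rightarrow> nat \<Rightarrow> (nat \<times> nat) list \<Rightarrow> bool" where
  "contour t x m g \<longleftrightarrow> g \<noteq> [] \<and> distinct g \<and> set g \<subseteq> shadow t x m \<and>
     (\<forall>u\<in>set g. fst u \<in> closed_sites (snd u)) \<and> successively chain_step g \<and>
     starts_left t x g \<and> ends_right t m g \<and>
     (x \<notin> dead t \<longrightarrow> hd g = (x, t)) \<and> (m \<notin> dead t \<longrightarrow> last g = (m, t)) \<and>
     (m + 1 - x) + chain_cost g + left_offset t x g + right_offset t m g \<le> length g"

definition maximal_blocked_run :: "nat \<Rightarrow> nat \<Rightarrow> nat \<Rightarrow> bool" where
  "maximal_blocked_run t x y \<longleftrightarrow> 1 \<le> x \<and> x \<le> y \<and> y \<le> L \<and> {x..y} \<subseteq> blocked t \<and>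
     (x = 1 \<or> x - 1 \<notin> blocked t) \<and> (y = L \<or> y + 1 \<notin> blocked t)"

lemma contour_single: "m \<in> closed_sites t \<Longrightarrow> contour t m m [(m, t)]"
  by (auto simp: contour_def shadow_def starts_left_def left_offset_def ends_right_def
      right_offset_def closed_sites_def)

lemma contour_junction:
  assumes g1: "contour t x m g1" and g2: "contour t (m + 1) y g2"
    and cut: "\<not> (m \<in> dead t \<and> m + 1 \<in> dead t)" and "0 < m" "m < L"
  shows "chain_step (last g1) (hd g2) \<and>
    step_cost (last g1) (hd g2) = right_offset t m g1 + left_offset t (m + 1) g2"
proof (cases "m \<in> dead t")
  case False
  then have last1: "last g1 = (m, t)" using g1 by (simp add: contour_def)
  from g2 have start2: "fst (hd g2) + (t - snd (hd g2)) = m + 1" "snd (hd g2) \<le> t"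
    using \<open>0 < m\<close> by (auto simp: contour_def starts_left_def)
  show ?thesis
  proof (cases "snd (hd g2) = t")
    case True
    then have "hd g2 = (m + 1, t)" using start2 by (cases "hd g2") auto
    then show ?thesis
      using last1 by (simp add: chain_step_def step_cost_def right_offset_def left_offset_def)
  next
    case False
    then show ?thesis using last1 start2 \<open>0 < m\<close>
      by (auto simp: chain_step_def step_cost_def right_offset_def left_offset_def)
  qed
next
  case True
  then have hd2: "hd g2 = (m + 1, t)" using g2 cut by (simp add: contour_def)
  from g1 have "fst (last g1) = m + (t - snd (last g1))" "snd (last g1) \<le> t"
    using \<open>m < L\<close> by (auto simp: contour_def ends_right_def)
  then show ?thesis using hd2 \<open>m < L\<close>
    by (cases "snd (last g1) = t")
      (auto simp: chain_step_def step_cost_def right_offset_def left_offset_def prod_eq_iff)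
qed

lemma contour_append:
  assumes g1: "contour t x m g1" and g2: "contour t (m + 1) y g2"
    and cut: "\<not> (m \<in> dead t \<and> m + 1 \<in> dead t)" and "1 \<le> x" "x \<le> m" "m < y" "y \<le> L"
  shows "contour t x y (g1 @ g2)"
proof -
  have ne: "g1 \<noteq> []" "g2 \<noteq> []" using g1 g2 by (auto simp: contour_def)
  have "set g1 \<inter> set g2 = {}"
    using shadow_disjoint[OF cut, of x y] g1 g2 by (auto simp: contour_def)
  moreover have "shadow t x m \<union> shadow t (m + 1) y \<subseteq> shadow t x y"
    using assms by (force simp: shadow_def)
  moreover have "chain_step (last g1) (hd g2)"
    "step_cost (last g1) (hd g2) = right_offset t m g1 + left_offset t (m + 1) g2"
    using contour_junction[OF g1 g2 cut] assms by auto
  moreover have "starts_left t x (g1 @ g2) = starts_left t x g1"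
    "left_offset t x (g1 @ g2) = left_offset t x g1"
    "ends_right t y (g1 @ g2) = ends_right t y g2"
    "right_offset t y (g1 @ g2) = right_offset t y g2"
    using ne by (simp_all add: starts_left_def left_offset_def ends_right_def right_offset_def)
  ultimately show ?thesis using g1 g2 ne assms
    by (auto simp: contour_def successively_append_iff chain_cost_append)
qed

lemma blocked_below_dead_run:
  assumes "{p..m} \<subseteq> dead (Suc t)" "p \<le> m"
  shows "{max 1 (p - 1)..min L (m + 1)} \<subseteq> blocked t"
proof
  fix z assume z: "z \<in> {max 1 (p - 1)..min L (m + 1)}"
  have "max p (min m z) \<in> dead (Suc t)" using assms by auto
  then show "z \<in> blocked t" by (rule blocked_if_near_dead) (use z in auto)
qed

lemma maximal_blocked_run_below_dead_run:
  assumes run: "{p..m} \<subseteq> dead (Suc t)" "p \<le> m"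
    and left: "p = 1 \<or> p - 1 \<notin> dead (Suc t)" and right: "m = L \<or> m + 1 \<notin> dead (Suc t)"
  shows "maximal_blocked_run t (max 1 (p - 1)) (min L (m + 1))"
proof -
  have "p \<in> dead (Suc t)" "m \<in> dead (Suc t)" using run by auto
  then have pm: "p \<in> {1..L}" "m \<in> {1..L}" using dead_subset by blast+
  note below = blocked_below_dead_run[OF run]
  have "max 1 (p - 1) - 1 \<notin> blocked t" if "max 1 (p - 1) \<noteq> 1"
  proof
    assume outer: "max 1 (p - 1) - 1 \<in> blocked t"
    have "p - 1 \<in> dead (Suc t)"
    proof (rule dead_SucI)
      show "p - 1 \<in> {1..L}" using that pm by auto
      fix i assume "i \<in> {1..L}" "i \<le> p - 1 + 1" "p - 1 \<le> i + 1"
      then have "i = max 1 (p - 1) - 1 \<or> i \<in> {max 1 (p - 1)..min L (m + 1)}"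
        using that pm run by auto
      then show "i \<in> blocked t" using outer below by blast
    qed
    then show False using left that by auto
  qed
  moreover have "min L (m + 1) + 1 \<notin> blocked t" if "min L (m + 1) \<noteq> L"
  proof
    assume outer: "min L (m + 1) + 1 \<in> blocked t"
    have "m + 1 \<in> dead (Suc t)"
    proof (rule dead_SucI)
      show "m + 1 \<in> {1..L}" using that pm by auto
      fix i assume "i \<in> {1..L}" "i \<le> m + 1 + 1" "m + 1 \<le> i + 1"
      then have "i = min L (m + 1) + 1 \<or> i \<in> {max 1 (p - 1)..min L (m + 1)}"
        using that pm run by auto
      then show "i \<in> blocked t" using outer below by blast
    qed
    then show False using right that by auto
  qed
  ultimately show ?thesis using below pm run by (auto simp: maximal_blocked_run_def)
qed

lemma shadow_below_dead_run:
  assumes run: "{p..m} \<subseteq> dead (Suc t)" "p \<le> m"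
  shows "shadow t (max 1 (p - 1)) (min L (m + 1)) \<subseteq> shadow (Suc t) p m"
proof
  fix u assume "u \<in> shadow t (max 1 (p - 1)) (min L (m + 1))"
  then obtain i s j' where u: "u = (i, s)" "s \<le> t" "j' \<in> {max 1 (p - 1)..min L (m + 1)}"
    and trail: "dead_trail (t - s) i s j'"
    unfolding shadow_def by auto
  define j where "j = max p (min m j')"
  have j: "j \<in> {p..m}" using run by (auto simp: j_def)
  have "p \<in> dead (Suc t)" "m \<in> dead (Suc t)" using run by auto
  then have "{p..m} \<subseteq> {max 1 (p - 1)..min L (m + 1)}"
    using dead_subset[of "Suc t"] by auto
  then have "span j' j \<subseteq> {max 1 (p - 1)..min L (m + 1)}"
    using u(3) j by (auto simp: span_def)
  then have "span j' j \<subseteq> blocked (s + (t - s))"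
    using blocked_below_dead_run[OF run] u(2) by simp
  moreover have "j \<in> dead (Suc (s + (t - s)))" using run u(2) j by auto
  ultimately have "dead_trail (Suc (t - s)) i s j"
    using dead_trail_snoc[OF trail] by blast
  with j show "u \<in> shadow (Suc t) p m"
    using u(1,2) by (auto simp: shadow_def Suc_diff_le)
qed

lemma starts_left_Suc:
  assumes "starts_left t (max 1 (p - 1)) g" "p = 1 \<or> 2 < p"
  shows "starts_left (Suc t) p g"
    "left_offset (Suc t) p g = left_offset t (max 1 (p - 1)) g + (if p = 1 then 0 else 1)"
  using assms by (auto simp: starts_left_def left_offset_def max_def split: if_splits)

lemma ends_right_Suc:
  assumes "ends_right t (min L (m + 1)) g" "m = L \<or> m + 1 < L"
  shows "ends_right (Suc t) m g"
    "right_offset (Suc t) m g = right_offset t (min L (m + 1)) g + (if m = L then 0 else 1)"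
  using assms by (auto simp: ends_right_def right_offset_def min_def split: if_splits)

lemma contour_lift:
  assumes g: "contour t (max 1 (p - 1)) (min L (m + 1)) g"
    and run: "{p..m} \<subseteq> dead (Suc t)" "p \<le> m"
    and left: "p = 1 \<or> p - 1 \<notin> dead (Suc t)" and right: "m = L \<or> m + 1 \<notin> dead (Suc t)"
  shows "contour (Suc t) p m g"
proof -
  have dead: "p \<in> dead (Suc t)" "m \<in> dead (Suc t)" using run by auto
  then have pm: "p \<in> {1..L}" "m \<in> {1..L}" using dead_subset by blast+
  have "p \<noteq> 2" using dead left two_dead_imp_one_dead by force
  then have left': "p = 1 \<or> 2 < p" using pm by auto
  have "m + 1 \<noteq> L" if "m \<noteq> L" using dead right that pred_L_dead_imp_L_dead by blast
  then have right': "m = L \<or> m + 1 < L" using pm by force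
  have width: "min L (m + 1) + 1 - max 1 (p - 1) =
      (m + 1 - p) + (if p = 1 then 0 else 1) + (if m = L then 0 else 1)"
    using pm run by auto
  have start: "starts_left t (max 1 (p - 1)) g" and stop: "ends_right t (min L (m + 1)) g"
    and len: "min L (m + 1) + 1 - max 1 (p - 1) + chain_cost g + left_offset t (max 1 (p - 1)) g
      + right_offset t (min L (m + 1)) g \<le> length g"
    using g by (simp_all add: contour_def)
  have "m + 1 - p + chain_cost g + left_offset (Suc t) p g + right_offset (Suc t) m g \<le> length g"
    using len width starts_left_Suc(2)[OF start left'] ends_right_Suc(2)[OF stop right'] by simp
  with g show ?thesis
    using shadow_below_dead_run[OF run] dead
      starts_left_Suc(1)[OF start left'] ends_right_Suc(1)[OF stop right']
    unfolding contour_def by blast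
qed

lemma contour_of_dead_run:
  assumes IH: "\<And>x y. maximal_blocked_run t x y \<Longrightarrow> \<exists>g. contour t x y g"
    and run: "{p..m} \<subseteq> dead (Suc t)" "p \<le> m"
    and left: "p = 1 \<or> p - 1 \<notin> dead (Suc t)" and right: "m = L \<or> m + 1 \<notin> dead (Suc t)"
  shows "\<exists>g. contour (Suc t) p m g"
  using IH[OF maximal_blocked_run_below_dead_run[OF run left right]]
    contour_lift[OF _ run left right] by blast

lemma contour_last_piece:
  assumes run: "maximal_blocked_run t x y"
    and IH: "\<And>t' x y. t = Suc t' \<Longrightarrow> maximal_blocked_run t' x y \<Longrightarrow> \<exists>g. contour t' x y g"
    and m: "x \<le> m" "m \<le> y" "\<not> (m \<in> dead t \<and> m + 1 \<in> dead t)"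
  shows "\<exists>q g. x \<le> q \<and> q \<le> m \<and> (q = x \<or> \<not> (q - 1 \<in> dead t \<and> q \<in> dead t)) \<and> contour t q m g"
proof (cases "m \<in> dead t")
  case False
  moreover have "m \<in> blocked t" using run m by (auto simp: maximal_blocked_run_def)
  ultimately have "contour t m m [(m, t)]" by (intro contour_single) (auto simp: blocked_def)
  then show ?thesis using False m by blast
next
  case True
  obtain p where p: "x \<le> p" "p \<le> m" "{p..m} \<subseteq> dead t" "p = x \<or> p - 1 \<notin> dead t"
    using run_left_end[OF True m(1)] by blast
  obtain t' where t: "t = Suc t'" using True by (cases t) auto
  have "p = 1 \<or> p - 1 \<notin> dead t"
    using p(4) run dead_subset_blocked by (auto simp: maximal_blocked_run_def)
  moreover have "m = L \<or> m + 1 \<notin> dead t" using True m by blast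
  ultimately obtain g where "contour t p m g"
    using contour_of_dead_run[OF IH[OF t]] p t by blast
  then show ?thesis using p by blast
qed

lemma contour_upto:
  assumes run: "maximal_blocked_run t x y"
    and IH: "\<And>t' x y. t = Suc t' \<Longrightarrow> maximal_blocked_run t' x y \<Longrightarrow> \<exists>g. contour t' x y g"
  shows "x \<le> m \<Longrightarrow> m \<le> y \<Longrightarrow> \<not> (m \<in> dead t \<and> m + 1 \<in> dead t) \<Longrightarrow> \<exists>g. contour t x m g"
proof (induction m rule: less_induct)
  case (less m)
  obtain q g2 where q: "x \<le> q" "q \<le> m" "(q = x \<or> \<not> (q - 1 \<in> dead t \<and> q \<in> dead t))"
    and g2: "contour t q m g2"
    using contour_last_piece[OF run IH less.prems] by blast
  show ?case
  proof (cases "q = x")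
    case True
    then show ?thesis using g2 by blast
  next
    case False
    have x: "1 \<le> x" "y \<le> L" using run by (auto simp: maximal_blocked_run_def)
    with q less.prems False have "q - 1 < m" "x \<le> q - 1" "q - 1 \<le> y"
      "\<not> (q - 1 \<in> dead t \<and> q - 1 + 1 \<in> dead t)"
      by auto
    then obtain g1 where "contour t x (q - 1) g1" using less.IH by blast
    moreover have "contour t (q - 1 + 1) m g2" using g2 q x by simp
    ultimately have "contour t x m (g1 @ g2)"
      using contour_append \<open>\<not> (q - 1 \<in> dead t \<and> q - 1 + 1 \<in> dead t)\<close> False q x less.prems
      by simp
    then show ?thesis by blast
  qed
qed

lemma contour_exists: "maximal_blocked_run t x y \<Longrightarrow> \<exists>g. contour t x y g"
proof (induction t arbitrary: x y)
  case 0
  then show ?case using contour_upto[OF 0, of y] by (auto simp: maximal_blocked_run_def)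
next
  case (Suc t)
  have "y + 1 \<notin> dead (Suc t)"
    using Suc.prems dead_subset dead_subset_blocked by (force simp: maximal_blocked_run_def)
  moreover have "\<exists>g. contour t' x y g" if "Suc t = Suc t'" "maximal_blocked_run t' x y" for t' x y
    using Suc.IH that by simp
  ultimately show ?case
    using contour_upto[OF Suc.prems] Suc.prems by (auto simp: maximal_blocked_run_def)
qed

lemma extinction_crossing_chain:
  assumes "active T = {}" "1 \<le> L"
  shows "\<exists>g\<in>crossing_chains L T. \<forall>u\<in>set g. \<not> X (fst u) (snd u)"
proof -
  obtain T' where T: "T = Suc T'" using assms by (cases T) auto
  have "{1..L} \<subseteq> blocked T'"
  proof
    fix z assume z: "z \<in> {1..L}"
    then have "z \<in> dead (Suc T')" using assms(1) T by (simp add: dead_def)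
    then show "z \<in> blocked T'" by (rule blocked_if_near_dead) (use z in auto)
  qed
  then have "maximal_blocked_run T' 1 L" using assms(2) by (simp add: maximal_blocked_run_def)
  then obtain g where g: "contour T' 1 L g" using contour_exists by blast
  have "u \<in> {1..L} \<times> {..<T}" if "u \<in> set g" for u
  proof -
    have "u \<in> shadow T' 1 L" "fst u \<in> closed_sites (snd u)"
      using g that by (auto simp: contour_def)
    then show ?thesis using T by (cases u) (auto simp: shadow_def closed_sites_def)
  qed
  moreover have "fst (hd g) = 1" "L + chain_cost g \<le> length g"
    using g by (simp_all add: contour_def starts_left_def left_offset_def right_offset_def)
  moreover have "\<forall>u\<in>set g. \<not> X (fst u) (snd u)"
    using g by (auto simp: contour_def closed_sites_def)
  ultimately show ?thesis
    using g unfolding crossing_chains_def contour_def by blast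
qed

text \<open>For L \<ge> 2 the sites carrying an open edge are exactly the active ones (for L = 1 no edge is
  ever open).\<close>

lemma active_Suc_iff:
  "j \<in> active (Suc t) \<longleftrightarrow>
    j \<in> {1..L} \<and> (\<exists>i\<in>{i \<in> {1..L}. i \<le> j + 1 \<and> j \<le> i + 1}. i \<in> active t \<and> X i t)"
  unfolding active.simps using active_subset[of t] by blast

lemma active_imp_open_edge_and_path:
  assumes "2 \<le> L"
  shows "j \<in> active t \<Longrightarrow> (\<exists>w. open_edge L X (j, t) w \<or> open_edge L X w (j, t)) \<and>
    (\<exists>i\<in>{1..L}. (open_adj L X)\<^sup>*\<^sup>* (i, 0) (j, t))"
proof (induction t arbitrary: j)
  case 0
  then have j: "1 \<le> j" "j \<le> L" by auto
  have "\<exists>w. open_edge L X (j, 0) w \<or> open_edge L X w (j, 0)"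
  proof (cases "j + 1 \<le> L")
    case True
    then show ?thesis using open_edge.base[OF j(1) True] by blast
  next
    case False
    then have "j = (j - 1) + 1" "1 \<le> j - 1" "(j - 1) + 1 \<le> L" using j assms by auto
    then show ?thesis using open_edge.base[of "j - 1" L X] by metis
  qed
  then show ?case using j by auto
next
  case (Suc t)
  then obtain i where i: "i \<in> active t" "X i t" "i \<le> j + 1" "j \<le> i + 1" and j: "j \<in> {1..L}"
    by auto
  from Suc.IH[OF i(1)] obtain i0 where edge: "\<exists>w. open_edge L X (i, t) w \<or> open_edge L X w (i, t)"
    and i0: "i0 \<in> {1..L}" "(open_adj L X)\<^sup>*\<^sup>* (i0, 0) (i, t)"
    by blast
  have "open_edge L X (i, t) (j, t + 1)"
    using open_edge.up[OF edge i(2)] i j by auto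
  moreover from this have "(open_adj L X)\<^sup>*\<^sup>* (i0, 0) (j, Suc t)"
    using i0(2) by (simp add: open_adj_def rtranclp.rtrancl_into_rtrancl)
  ultimately show ?case using i0(1) by auto
qed

lemma open_edge_active: "open_edge L X u v \<Longrightarrow> fst u \<in> active (snd u) \<and> fst v \<in> active (snd v)"
  by (induction rule: open_edge.induct) auto

lemma reaches_iff_active:
  assumes "2 \<le> L"
  shows "reaches L X T \<longleftrightarrow> active T \<noteq> {}"
proof
  assume "reaches L X T"
  then obtain i j where ij: "i \<in> {1..L}" "(open_adj L X)\<^sup>*\<^sup>* (i, 0) (j, T)"
    by (auto simp: reaches_def)
  from ij(2) show "active T \<noteq> {}"
  proof (cases rule: rtranclp.cases)
    case rtrancl_refl
    then show ?thesis using ij(1) by auto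
  next
    case (rtrancl_into_rtrancl b)
    then have "open_edge L X b (j, T) \<or> open_edge L X (j, T) b" by (simp add: open_adj_def)
    then have "j \<in> active T" using open_edge_active by fastforce
    then show ?thesis by auto
  qed
next
  assume "active T \<noteq> {}"
  then obtain j where j: "j \<in> active T" by auto
  then have "j \<in> {1..L}" using active_subset[of T] by blast
  then show "reaches L X T"
    unfolding reaches_def using active_imp_open_edge_and_path[OF assms j] by blast
qed

end

section \<open>The Peierls estimate\<close>

lemma (in prob_space) prob_Inter_compl_indep_events:
  assumes "indep_events E I" "J \<subseteq> I" "finite J" "J \<noteq> {}"
  shows "prob (\<Inter>j\<in>J. space M - E j) = (\<Prod>j\<in>J. prob (space M - E j))"
proof -
  have "indep_sets (\<lambda>i. {E i}) I" using assms(1) by (simp add: indep_events_def_alt)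
  then have "indep_sets (\<lambda>i. sigma_sets (space M) {E i}) I"
    by (rule indep_sets_sigma) (auto simp: Int_stable_def)
  moreover have "(\<lambda>j. space M - E j) \<in> Pi J (\<lambda>i. sigma_sets (space M) {E i})"
    by (auto intro: sigma_sets.Compl)
  ultimately show ?thesis using assms(2-4) unfolding indep_sets_def by blast
qed

locale coin_field = prob_space M for M :: "'a measure" +
  fixes E :: "nat \<times> nat \<Rightarrow> 'a set"
  assumes indep: "indep_events E UNIV"
    and events_E: "E u \<in> events"
    and prob_E: "0.99 \<le> prob (E u)"
begin

lemma events_active: "{\<omega> \<in> space M. j \<in> percolation.active L (\<lambda>i t. \<omega> \<in> E (i, t)) t} \<in> events"
proof (induction t arbitrary: j)
  case 0
  show ?case by (cases "j \<in> {1..L}") (auto simp: percolation.active.simps)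
next
  case (Suc t)
  let ?A = "\<lambda>i t. {\<omega> \<in> space M. i \<in> percolation.active L (\<lambda>i t. \<omega> \<in> E (i, t)) t}"
  have "?A j (Suc t) = (if j \<in> {1..L}
      then (\<Union>i\<in>{i \<in> {1..L}. i \<le> j + 1 \<and> j \<le> i + 1}. ?A i t \<inter> E (i, t)) else {})"
    unfolding percolation.active_Suc_iff by auto
  then show ?case using Suc events_E by auto
qed

lemma prob_all_closed_le:
  assumes "g \<noteq> []" "distinct g"
  shows "prob {\<omega> \<in> space M. \<forall>u\<in>set g. \<omega> \<notin> E u} \<le> (1/100) ^ length g"
proof -
  have "{\<omega> \<in> space M. \<forall>u\<in>set g. \<omega> \<notin> E u} = (\<Inter>u\<in>set g. space M - E u)"
    using assms(1) by auto
  then have "prob {\<omega> \<in> space M. \<forall>u\<in>set g. \<omega> \<notin> E u} = (\<Prod>u\<in>set g. prob (space M - E u))"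
    using prob_Inter_compl_indep_events[OF indep] assms(1) by simp
  also have "\<dots> \<le> (\<Prod>u\<in>set g. 1/100)"
  proof (rule prod_mono)
    fix u
    have "prob (space M - E u) = 1 - prob (E u)" by (rule prob_compl[OF events_E])
    then show "0 \<le> prob (space M - E u) \<and> prob (space M - E u) \<le> 1/100"
      using prob_E[of u] by auto
  qed
  also have "\<dots> = (1/100) ^ length g" using assms(2) by (simp add: distinct_card)
  finally show ?thesis .
qed

lemma events_reaches:
  assumes "2 \<le> L"
  shows "{\<omega> \<in> space M. reaches L (\<lambda>i t. \<omega> \<in> E (i, t)) T} \<in> events"
proof -
  have "reaches L (\<lambda>i t. \<omega> \<in> E (i, t)) T \<longleftrightarrow>
      (\<exists>j\<in>{1..L}. j \<in> percolation.active L (\<lambda>i t. \<omega> \<in> E (i, t)) T)" for \<omega>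
    using percolation.reaches_iff_active[OF assms] percolation.active_subset[of L _ T] by blast
  then have "{\<omega> \<in> space M. reaches L (\<lambda>i t. \<omega> \<in> E (i, t)) T} =
      (\<Union>j\<in>{1..L}. {\<omega> \<in> space M. j \<in> percolation.active L (\<lambda>i t. \<omega> \<in> E (i, t)) T})"
    by auto
  then show ?thesis using events_active by auto
qed

lemma prob_reaches_ge:
  assumes "2 \<le> L"
  shows "1 - T * (1/10) ^ L \<le> prob {\<omega> \<in> space M. reaches L (\<lambda>i t. \<omega> \<in> E (i, t)) T}"
proof -
  define R where "R = {\<omega> \<in> space M. reaches L (\<lambda>i t. \<omega> \<in> E (i, t)) T}"
  define all_closed where "all_closed g = {\<omega> \<in> space M. \<forall>u\<in>set g. \<omega> \<notin> E u}" for g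
  have R: "R \<in> events" unfolding R_def using events_reaches[OF assms] .
  have all_closed: "all_closed g \<in> events" for g
  proof -
    have "all_closed g = space M - (\<Union>u\<in>set g. E u)" by (auto simp: all_closed_def)
    then show ?thesis using events_E by auto
  qed
  have "space M - R \<subseteq> (\<Union>g\<in>crossing_chains L T. all_closed g)"
  proof
    fix \<omega> assume \<omega>: "\<omega> \<in> space M - R"
    then have "percolation.active L (\<lambda>i t. \<omega> \<in> E (i, t)) T = {}"
      using percolation.reaches_iff_active[OF assms] by (auto simp: R_def)
    then have "\<exists>g\<in>crossing_chains L T. \<forall>u\<in>set g. \<omega> \<notin> E (fst u, snd u)"
      by (rule percolation.extinction_crossing_chain) (use assms in simp)
    then obtain g where "g \<in> crossing_chains L T" "\<forall>u\<in>set g. \<omega> \<notin> E u"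
      by auto
    then show "\<omega> \<in> (\<Union>g\<in>crossing_chains L T. all_closed g)"
      using \<omega> by (auto simp: all_closed_def)
  qed
  then have "prob (space M - R) \<le> prob (\<Union>g\<in>crossing_chains L T. all_closed g)"
    using all_closed finite_crossing_chains by (intro finite_measure_mono) auto
  also have "\<dots> \<le> (\<Sum>g\<in>crossing_chains L T. prob (all_closed g))"
    using all_closed finite_crossing_chains by (intro finite_measure_subadditive_finite) auto
  also have "\<dots> \<le> (\<Sum>g\<in>crossing_chains L T. (1/100) ^ length g)"
    unfolding all_closed_def
    by (intro sum_mono prob_all_closed_le) (auto simp: crossing_chains_def)
  also have "\<dots> \<le> T * (1/10) ^ L" by (rule crossing_chains_weight_le)
  finally show ?thesis using prob_compl[OF R] by (simp add: R_def)
qed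

end

lemma ceiling_pow_mult_tenth_pow_eventually_less:
  assumes "0 < \<epsilon>"
  shows "\<exists>L0. \<forall>L\<ge>L0. real (nat \<lceil>(1.01::real) ^ L\<rceil>) * (1/10) ^ L < \<epsilon>"
proof -
  obtain L0 where L0: "(101/1000::real) ^ L0 < \<epsilon> / 2"
    using real_arch_pow_inv[of "\<epsilon> / 2" "101/1000"] assms by auto
  have "real (nat \<lceil>(1.01::real) ^ L\<rceil>) * (1/10) ^ L < \<epsilon>" if "L0 \<le> L" for L
  proof -
    have "1 \<le> (1.01::real) ^ L" by (rule one_le_power) simp
    then have "real (nat \<lceil>(1.01::real) ^ L\<rceil>) \<le> 2 * 1.01 ^ L" by linarith
    then have "real (nat \<lceil>(1.01::real) ^ L\<rceil>) * (1/10) ^ L \<le> 2 * 1.01 ^ L * (1/10) ^ L"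
      by (intro mult_right_mono) auto
    also have "\<dots> = 2 * (101/1000) ^ L" by (simp add: power_mult_distrib[symmetric])
    also have "\<dots> \<le> 2 * (101/1000) ^ L0" using that by (intro mult_left_mono power_decreasing) auto
    finally show ?thesis using L0 by linarith
  qed
  then show ?thesis by blast
qed

theorem lemma4p5:
  fixes \<epsilon> :: real
  assumes "\<epsilon> > 0"
  shows "\<exists>L0::nat. \<forall>L\<ge>L0. \<forall>(M :: 'a measure) (E :: nat \<times> nat \<Rightarrow> 'a set).
           prob_space M \<longrightarrow> prob_space.indep_events M E UNIV \<longrightarrow>
           (\<forall>x. E x \<in> sets M \<and> measure M (E x) \<ge> 0.99) \<longrightarrow>
           measure M {\<omega> \<in> space M. reaches L (\<lambda>i t. \<omega> \<in> E (i, t)) (nat \<lceil>(1.01::real) ^ L\<rceil>)}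
             \<ge> 1 - \<epsilon>"
proof -
  obtain L0 where L0: "\<forall>L\<ge>L0. real (nat \<lceil>(1.01::real) ^ L\<rceil>) * (1/10) ^ L < \<epsilon>"
    using ceiling_pow_mult_tenth_pow_eventually_less[OF assms] by blast
  show ?thesis
  proof (intro exI[of _ "max 2 L0"] allI impI)
    fix L :: nat and M :: "'a measure" and E :: "nat \<times> nat \<Rightarrow> 'a set"
    assume L: "max 2 L0 \<le> L" and M: "prob_space M" and indep: "prob_space.indep_events M E UNIV"
      and E: "\<forall>x. E x \<in> sets M \<and> measure M (E x) \<ge> 0.99"
    interpret coin_field M E
      using M indep E by (intro coin_field.intro coin_field_axioms.intro) auto
    have "real (nat \<lceil>(1.01::real) ^ L\<rceil>) * (1/10) ^ L < \<epsilon>" using L0 L by simp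
    moreover have "1 - real (nat \<lceil>(1.01::real) ^ L\<rceil>) * (1/10) ^ L
        \<le> prob {\<omega> \<in> space M. reaches L (\<lambda>i t. \<omega> \<in> E (i, t)) (nat \<lceil>(1.01::real) ^ L\<rceil>)}"
      using L by (intro prob_reaches_ge) simp
    ultimately show "measure M {\<omega> \<in> space M. reaches L (\<lambda>i t. \<omega> \<in> E (i, t)) (nat \<lceil>(1.01::real) ^ L\<rceil>)}
        \<ge> 1 - \<epsilon>"
      by linarith
  qed
qed

end
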